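(* Fix integers $1\le m\le n$ and $f\in[0,1/2]$. Then $q\mapsto q^2/v(q)$ is an increasing function of the integer $q$ on $1\le q\le 2^n$.
   Context: For $n,m$, $f$ and integer $1\le q\le 2^n+1$ define $w^*(n,q)=\max\{w\ge0:\sum_{j=1}^w\binom{n}{j}\le q-1\}$, $r(n,q)=q-1-\sum_{w=1}^{w^*(n,q)}\binom{n}{w}$, and $$(q-1)\,\epsilon(n,m,q,f)=\sum_{w=1}^{w^*(n,q)}\binom{n}{w}\frac{1}{2^m}(1+(1-2f)^w)^m+\frac{r(n,q)}{2^m}(1+(1-2f)^{w^*(n,q)+1})^m$$ (so $\epsilon(n,m,q,f)$ is this bracket divided by $q-1$ when $q\ge2$). Define $$v(q)=\frac{q}{2^m}\left(1+\epsilon(n,m,q,f)\cdot(q-1)-\frac{q}{2^m}\right).$$ *)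

theory Defs
  imports Complex_Main
begin

definition wstar :: "nat \<Rightarrow> nat \<Rightarrow> nat" where
  "wstar n q = Max {w. w \<le> n \<and> (\<Sum>j=1..w. n choose j) \<le> q - 1}"

definition rr :: "nat \<Rightarrow> nat \<Rightarrow> nat" where
  "rr n q = q - 1 - (\<Sum>w=1..wstar n q. n choose w)"

text \<open>the bracket, equal to (q-1) times epsilon\<close>
definition eps_mul :: "nat \<Rightarrow> nat \<Rightarrow> nat \<Rightarrow> real \<Rightarrow> real" where
  "eps_mul n m q f =
     (\<Sum>w=1..wstar n q. real (n choose w) * (1 / 2^m) * (1 + (1 - 2*f)^w)^m)
     + real (rr n q) / 2^m * (1 + (1 - 2*f)^(wstar n q + 1))^m"

definition vfun :: "nat \<Rightarrow> nat \<Rightarrow> real \<Rightarrow> nat \<Rightarrow> real" where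
  "vfun n m f q = real q / 2^m * (1 + eps_mul n m q f - real q / 2^m)"

end

theory Submission
  imports Defs
begin

text \<open>Listing the nonzero vectors of F_2^n by increasing Hamming weight, the k-th one has
  weight wstar n k + 1, so (q-1)*eps is the sum over the first q-1 of them of the terms
  2^-m (1 + (1-2f)^w)^m. These terms decrease and lie in [2^-m, 1], hence q^2/v(q) = 2^m q / D(q)
  where D(q+1) - D(q) is antitone and bounded by D(1) = 1 - 2^-m. Then D(q) dominates
  q (D(q+1) - D(q)), which is exactly the monotonicity of q / D(q).\<close>

lemma div_partial_sum_antimono_mono:
  fixes g :: "nat \<Rightarrow> real"
  assumes "antimono g" and g_nonneg: "\<And>k. 0 \<le> g k" and g_le: "\<And>k. g k \<le> c" and "0 < c"
    and "1 \<le> q" "q \<le> q'"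
  shows "real q / (c + (\<Sum>k=1..<q. g k)) \<le> real q' / (c + (\<Sum>k=1..<q'. g k))"
proof -
  define D where "D q = c + (\<Sum>k=1..<q. g k)" for q
  have D_pos: "0 < D q" for q
    unfolding D_def using \<open>0 < c\<close> by (simp add: g_nonneg sum_nonneg add_pos_nonneg)
  have step_le: "real q / D q \<le> real (Suc q) / D (Suc q)" if "1 \<le> q" for q
  proof -
    have "real (q - 1) * g q = (\<Sum>k=1..<q. g q)" by simp
    also have "\<dots> \<le> (\<Sum>k=1..<q. g k)"
      by (intro sum_mono antimonoD[OF \<open>antimono g\<close>]) simp
    finally have "real q * g q \<le> D q"
      using that g_le[of q] unfolding D_def by (simp add: of_nat_diff algebra_simps)
    moreover have "D (Suc q) = D q + g q" unfolding D_def using that by simp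
    ultimately have "real q * D (Suc q) \<le> real (Suc q) * D q" by (simp add: algebra_simps)
    then show ?thesis using D_pos[of q] D_pos[of "Suc q"] by (simp add: divide_simps)
  qed
  from \<open>q \<le> q'\<close> show ?thesis unfolding D_def[symmetric]
  proof (induction q' rule: dec_induct)
    case (step k)
    then show ?case using step_le[of k] \<open>1 \<le> q\<close> by simp
  qed simp
qed

definition weight_term :: "nat \<Rightarrow> real \<Rightarrow> nat \<Rightarrow> real" where
  "weight_term m f w = 1 / 2^m * (1 + (1 - 2*f)^w)^m"

lemma weight_term_bounds:
  assumes "0 \<le> f" "f \<le> 1/2"
  shows "1 / 2^m \<le> weight_term m f w" "weight_term m f w \<le> 1"
proof -
  have b0: "0 \<le> (1 - 2*f)^w" and b1: "(1 - 2*f)^w \<le> 1"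
    using assms by (auto intro: power_le_one)
  have "1 \<le> (1 + (1 - 2*f)^w)^m" using b0 by (intro one_le_power) auto
  then show "1 / 2^m \<le> weight_term m f w" unfolding weight_term_def by (simp add: divide_right_mono)
  have "(1 + (1 - 2*f)^w)^m \<le> 2^m" using b0 b1 by (intro power_mono) auto
  then show "weight_term m f w \<le> 1" unfolding weight_term_def by simp
qed

lemma weight_term_antimono:
  assumes "0 \<le> f" "f \<le> 1/2" "w \<le> w'"
  shows "weight_term m f w' \<le> weight_term m f w"
proof -
  have "(1 - 2*f)^w' \<le> (1 - 2*f)^w" using assms by (intro power_decreasing) auto
  moreover have "0 \<le> (1 - 2*f)^w'" using assms by simp
  ultimately have "(1 + (1 - 2*f)^w')^m \<le> (1 + (1 - 2*f)^w)^m" by (intro power_mono) auto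
  then show ?thesis unfolding weight_term_def by (simp add: divide_right_mono)
qed

lemma eps_mul_weight_term:
  "eps_mul n m q f = (\<Sum>w=1..wstar n q. real (n choose w) * weight_term m f w)
      + real (rr n q) * weight_term m f (wstar n q + 1)"
  unfolding eps_mul_def weight_term_def by (simp add: mult.assoc)

lemma sum_choose_from_1: "(\<Sum>j=1..n. n choose j) = 2^n - (1::nat)"
proof -
  have "(2::nat)^n = (\<Sum>j\<le>n. n choose j)" by (rule choose_row_sum[symmetric])
  also have "\<dots> = 1 + (\<Sum>j=1..n. n choose j)"
    by (simp add: atMost_atLeast0 sum.atLeast_Suc_atMost)
  finally show ?thesis by simp
qed

lemma
  shows wstar_le: "wstar n q \<le> n"
    and sum_choose_wstar_le: "(\<Sum>j=1..wstar n q. n choose j) \<le> q - 1"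
    and less_sum_choose_Suc_wstar:
      "wstar n q < n \<Longrightarrow> q - 1 < (\<Sum>j=1..Suc (wstar n q). n choose j)"
proof -
  define S where "S = {w. w \<le> n \<and> (\<Sum>j=1..w. n choose j) \<le> q - 1}"
  have fin: "finite S" unfolding S_def by (rule finite_subset[of _ "{..n}"]) auto
  have ws: "wstar n q = Max S" unfolding wstar_def S_def ..
  have "Max S \<in> S" using fin Max_in[of S] unfolding S_def by fastforce
  then show "wstar n q \<le> n" "(\<Sum>j=1..wstar n q. n choose j) \<le> q - 1"
    unfolding ws S_def by auto
  show "q - 1 < (\<Sum>j=1..Suc (wstar n q). n choose j)" if "wstar n q < n"
  proof (rule ccontr)
    assume "\<not> ?thesis"
    then have "Suc (wstar n q) \<in> S" using that unfolding S_def by auto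
    then show False using Max_ge[OF fin] ws by fastforce
  qed
qed

lemma wstar_eqI:
  assumes "W \<le> n" "(\<Sum>j=1..W. n choose j) \<le> q - 1"
    and "W = n \<or> q - 1 < (\<Sum>j=1..Suc W. n choose j)"
  shows "wstar n q = W"
  unfolding wstar_def
proof (rule Max_eqI)
  show "finite {w. w \<le> n \<and> (\<Sum>j=1..w. n choose j) \<le> q - 1}" by simp
  show "W \<in> {w. w \<le> n \<and> (\<Sum>j=1..w. n choose j) \<le> q - 1}" using assms by simp
  fix y assume y: "y \<in> {w. w \<le> n \<and> (\<Sum>j=1..w. n choose j) \<le> q - 1}"
  show "y \<le> W"
  proof (rule ccontr)
    assume "\<not> y \<le> W"
    then have "(\<Sum>j=1..Suc W. n choose j) \<le> (\<Sum>j=1..y. n choose j)" by (intro sum_mono2) auto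
    then show False using y assms(3) \<open>\<not> y \<le> W\<close> by auto
  qed
qed

lemma wstar_mono: "q \<le> q' \<Longrightarrow> wstar n q \<le> wstar n q'"
  unfolding wstar_def by (rule Max_mono) (auto intro: finite_subset[of _ "{..n}"])

lemma eps_mul_Suc:
  assumes "1 \<le> q" "q < 2^n"
  shows "eps_mul n m (Suc q) f = eps_mul n m q f + weight_term m f (Suc (wstar n q))"
proof -
  define W where "W = wstar n q"
  have W_le: "W \<le> n" and sum_W: "(\<Sum>j=1..W. n choose j) \<le> q - 1"
    unfolding W_def by (rule wstar_le sum_choose_wstar_le)+
  have "W \<noteq> n" using sum_W sum_choose_from_1[of n] assms by auto
  then have W_less: "W < n" using W_le by simp
  then have q_less: "q - 1 < (\<Sum>j=1..W. n choose j) + (n choose Suc W)"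
    using less_sum_choose_Suc_wstar[of n q] unfolding W_def by simp
  let ?S = "\<Sum>w=1..W. real (n choose w) * weight_term m f w"
  have "eps_mul n m (Suc q) f = ?S + real (Suc (rr n q)) * weight_term m f (Suc W)"
  proof (cases "q < (\<Sum>j=1..W. n choose j) + (n choose Suc W)")
    case True
    \<comment> \<open>the new vector has the same weight as the current last one\<close>
    have w: "wstar n (Suc q) = W" using wstar_eqI[of W n "Suc q"] W_le sum_W True by simp
    have "rr n (Suc q) = Suc (rr n q)" unfolding rr_def using w W_def sum_W assms by simp
    then show ?thesis unfolding eps_mul_weight_term using w by simp
  next
    case False
    \<comment> \<open>the new vector completes the layer of weight \<open>Suc W\<close>\<close>
    then have q_eq: "q = (\<Sum>j=1..W. n choose j) + (n choose Suc W)" using q_less assms by linarith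
    have "Suc W = n \<or> q < (\<Sum>j=1..Suc (Suc W). n choose j)"
      using W_less q_eq by (cases "Suc W = n") simp_all
    then have w: "wstar n (Suc q) = Suc W" using wstar_eqI[of "Suc W" n "Suc q"] W_less q_eq by simp
    have "rr n (Suc q) = 0" unfolding rr_def using w q_eq by simp
    moreover have "Suc (rr n q) = n choose Suc W" unfolding rr_def using W_def q_eq W_less by simp
    ultimately show ?thesis unfolding eps_mul_weight_term using w by simp
  qed
  moreover have "eps_mul n m q f = ?S + real (rr n q) * weight_term m f (Suc W)"
    unfolding W_def eps_mul_weight_term by simp
  ultimately show ?thesis unfolding W_def by (simp add: algebra_simps)
qed

lemma eps_mul_eq_sum_weight_term:
  assumes "1 \<le> n" "1 \<le> q" "q \<le> 2^n"
  shows "eps_mul n m q f = (\<Sum>k=1..<q. weight_term m f (Suc (wstar n k)))"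
  using assms(2,3)
proof (induction q rule: dec_induct)
  case base
  have "wstar n 1 = 0" using wstar_eqI[of 0 n 1] assms(1) by simp
  then show ?case unfolding eps_mul_def rr_def by simp
next
  case (step q)
  then show ?case using eps_mul_Suc[of q n m f] by simp
qed

lemma vfun_eq_partial_sum:
  assumes "1 \<le> n" "1 \<le> q" "q \<le> 2^n"
  shows "vfun n m f q = real q / 2^m *
    ((1 - 1/2^m) + (\<Sum>k=1..<q. weight_term m f (Suc (wstar n k)) - 1/2^m))"
proof -
  have "real q / 2^m = 1/2^m + real (q - 1) / 2^m"
    using assms(2) by (simp add: of_nat_diff add_divide_distrib[symmetric])
  then show ?thesis unfolding vfun_def eps_mul_eq_sum_weight_term[OF assms]
    by (simp add: sum_subtractf)
qed

theorem lemma2: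
  fixes n m :: nat and f :: real
  assumes "1 \<le> m" and "m \<le> n" and "0 \<le> f" and "f \<le> 1/2"
  shows "\<forall>q q'. 1 \<le> q \<longrightarrow> q \<le> q' \<longrightarrow> q' \<le> 2^n \<longrightarrow>
           real q ^ 2 / vfun n m f q \<le> real q' ^ 2 / vfun n m f q'"
proof (intro allI impI)
  fix q q' :: nat
  assume "1 \<le> q" "q \<le> q'" "q' \<le> 2^n"
  define M :: real where "M = 2^m"
  define g where "g k = weight_term m f (Suc (wstar n k)) - 1/M" for k
  define D where "D k = (1 - 1/M) + (\<Sum>j=1..<k. g j)" for k
  have "2 \<le> M" unfolding M_def using power_increasing[OF \<open>1 \<le> m\<close>, of "2::real"] by simp
  have ratio: "real k ^ 2 / vfun n m f k = M * (real k / D k)" if "1 \<le> k" "k \<le> 2^n" for k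
  proof -
    have "vfun n m f k = real k / M * D k"
      using vfun_eq_partial_sum[of n k m f] that assms unfolding D_def g_def M_def by simp
    then show ?thesis using that \<open>2 \<le> M\<close> by (simp add: power2_eq_square)
  qed
  have "antimono g"
    unfolding g_def by (intro antimonoI diff_right_mono weight_term_antimono assms) (simp add: wstar_mono)
  moreover have "0 \<le> g k" "g k \<le> 1 - 1/M" for k
    using weight_term_bounds[OF assms(3,4)] unfolding g_def M_def by auto
  ultimately have "real q / D q \<le> real q' / D q'"
    unfolding D_def using \<open>2 \<le> M\<close> \<open>1 \<le> q\<close> \<open>q \<le> q'\<close> by (intro div_partial_sum_antimono_mono) auto
  then have "M * (real q / D q) \<le> M * (real q' / D q')" using \<open>2 \<le> M\<close> by (intro mult_left_mono) auto
  then show "real q ^ 2 / vfun n m f q \<le> real q' ^ 2 / vfun n m f q'"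
    using ratio[of q] ratio[of q'] \<open>1 \<le> q\<close> \<open>q \<le> q'\<close> \<open>q' \<le> 2^n\<close> by simp
qed

end
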